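(* In the instance constructed below, if there are $k$ distinct elements (distinct indices) $a_1,\dots,a_k$ of the multiset $\mathcal A$ and an index $m\in\{1,\dots,k-1\}$ with $\sum_{j=1}^m a_j=\sum_{j=m+1}^k a_j$, then the $2k$ rectangles $R_{a_1},R'_{a_1},\dots,R_{a_k},R'_{a_k}$ can all be packed feasibly into $K$ without rotating any of them. Moreover, every feasible packing of this instance (with or without rotations) contains at most $2k$ rectangles, so in this case $|\mathrm{OPT}|=2k$ both for 2DK and for 2DKR.
   Context: Let $k\ge 9$ be an odd integer and $\mathcal A$ a multiset of $n$ positive integers; let $M=\max_{a\in\mathcal A}a$ and $N=2Mk^4$, $K=[0,N]\times[0,N]$. For each element $a$ of $\mathcal A$ (counted with multiplicity) create two items (rectangles) $R_a$ with width $w(R_a)=N/k+a$ and height $h(R_a)=N/2-a$, and $R'_a$ with width $w(R'_a)=N/k-a$ and height $h(R'_a)=N/2+a$, each of profit $1$. A feasible packing places a subset of the items as pairwise disjoint open axis-parallel rectangles inside $K$; in 2DK the items keep their given orientation, in 2DKR each may be rotated by $90^\circ$. $\mathrm{OPT}$ denotes a maximum-cardinality feasible packing. *)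

theory Defs
  imports Complex_Main
begin

text \<open>The multiset A of n positive integers is represented by a function
  a :: nat => nat on the index set {..<n} (index i = one copy of an element).
  Items are pairs (i, b): (i, False) is R_{a_i}, (i, True) is R'_{a_i}.\<close>

type_synonym item = "nat \<times> bool"

definition maxA :: "nat \<Rightarrow> (nat \<Rightarrow> nat) \<Rightarrow> nat" where
  "maxA n a = Max (a ` {..<n})"

definition bigN :: "nat \<Rightarrow> nat \<Rightarrow> (nat \<Rightarrow> nat) \<Rightarrow> real" where
  "bigN k n a = 2 * real (maxA n a) * real k ^ 4"

definition items :: "nat \<Rightarrow> item set" where
  "items n = {(i, b). i < n}"

definition item_width :: "nat \<Rightarrow> nat \<Rightarrow> (nat \<Rightarrow> nat) \<Rightarrow> item \<Rightarrow> real" where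
  "item_width k n a it = (case it of (i, b) \<Rightarrow>
     if b then bigN k n a / real k - real (a i) else bigN k n a / real k + real (a i))"

definition item_height :: "nat \<Rightarrow> nat \<Rightarrow> (nat \<Rightarrow> nat) \<Rightarrow> item \<Rightarrow> real" where
  "item_height k n a it = (case it of (i, b) \<Rightarrow>
     if b then bigN k n a / 2 + real (a i) else bigN k n a / 2 - real (a i))"

definition open_rect :: "real \<times> real \<Rightarrow> real \<Rightarrow> real \<Rightarrow> (real \<times> real) set" where
  "open_rect p w h = {(u, v). fst p < u \<and> u < fst p + w \<and> snd p < v \<and> v < snd p + h}"

definition placed :: "nat \<Rightarrow> nat \<Rightarrow> (nat \<Rightarrow> nat) \<Rightarrow> (item \<Rightarrow> real \<times> real) \<Rightarrow> (item \<Rightarrow> bool)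
    \<Rightarrow> item \<Rightarrow> (real \<times> real) set" where
  "placed k n a pos rot it =
     (if rot it then open_rect (pos it) (item_height k n a it) (item_width k n a it)
      else open_rect (pos it) (item_width k n a it) (item_height k n a it))"

definition feasible_packing :: "nat \<Rightarrow> nat \<Rightarrow> (nat \<Rightarrow> nat) \<Rightarrow> item set
    \<Rightarrow> (item \<Rightarrow> real \<times> real) \<Rightarrow> (item \<Rightarrow> bool) \<Rightarrow> bool" where
  "feasible_packing k n a S pos rot \<longleftrightarrow>
     S \<subseteq> items n \<and>
     (\<forall>it\<in>S. placed k n a pos rot it \<subseteq> {0..bigN k n a} \<times> {0..bigN k n a}) \<and>
     (\<forall>it\<in>S. \<forall>it'\<in>S. it \<noteq> it' \<longrightarrow> placed k n a pos rot it \<inter> placed k n a pos rot it' = {})"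

definition packable_2DK :: "nat \<Rightarrow> nat \<Rightarrow> (nat \<Rightarrow> nat) \<Rightarrow> item set \<Rightarrow> bool" where
  "packable_2DK k n a S \<longleftrightarrow> (\<exists>pos. feasible_packing k n a S pos (\<lambda>_. False))"

definition packable_2DKR :: "nat \<Rightarrow> nat \<Rightarrow> (nat \<Rightarrow> nat) \<Rightarrow> item set \<Rightarrow> bool" where
  "packable_2DKR k n a S \<longleftrightarrow> (\<exists>pos rot. feasible_packing k n a S pos rot)"

text \<open>|OPT|: maximum cardinality of a feasible packing (all profits are 1).\<close>
definition opt_2DK :: "nat \<Rightarrow> nat \<Rightarrow> (nat \<Rightarrow> nat) \<Rightarrow> nat" where
  "opt_2DK k n a = Max (card ` {S. packable_2DK k n a S})"

definition opt_2DKR :: "nat \<Rightarrow> nat \<Rightarrow> (nat \<Rightarrow> nat) \<Rightarrow> nat" where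
  "opt_2DKR k n a = Max (card ` {S. packable_2DKR k n a S})"

end

theory Submission
  imports Defs "HOL-Analysis.Analysis"
begin

text \<open>Every item has area at least (N/k - M)(N/2 - M), and 2k + 1 such areas exceed N^2, so no
  packing, rotated or not, holds more than 2k items.

  For the packing, split the chosen elements into the halves A1 and A2 of equal sum. For A1, put the
  tall items R'_a on the floor and the flat items R_a against the ceiling, both rows sorted by
  decreasing a: as h(R_a) + h(R'_a) = N, the ceiling row rests on the descending staircase formed
  by the floor row. The block of A2 is built in the same way and then rotated by 180 degrees about
  the centre of K. The floor row of A1 and the (rotated) ceiling row of A2 have total width
  |A1| N/k - \<Sum>A1 + |A2| N/k + \<Sum>A2, which is N exactly because \<Sum>A1 = \<Sum>A2; likewise for the other
  two rows.\<close>

lemma open_rect_eq_box: "open_rect p w h = box p (fst p + w, snd p + h)"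
  by (cases p) (auto simp: open_rect_def mem_box Basis_prod_def inner_prod_def)

lemma open_rect_in_sets_borel: "open_rect p w h \<in> sets borel"
  by (simp add: open_rect_eq_box)

lemma measure_open_rect:
  assumes "0 \<le> w" "0 \<le> h"
  shows "measure lborel (open_rect p w h) = w * h"
  using assms unfolding open_rect_eq_box
  by (subst measure_lborel_box) (auto simp: Basis_prod_def inner_prod_def)

lemma open_rect_disjointI:
  assumes "fst p + w \<le> fst q \<or> fst q + w' \<le> fst p \<or> snd p + h \<le> snd q \<or> snd q + h' \<le> snd p"
  shows "open_rect p w h \<inter> open_rect q w' h' = {}"
  using assms by (auto simp: open_rect_def)

lemma square_eq_cbox: "{0..N} \<times> {0..N} = cbox (0, 0) (N, N :: real)"
  by (auto simp: cbox_Pair_eq)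

lemma measure_square: "0 \<le> N \<Longrightarrow> measure lborel ({0..N} \<times> {0..N :: real}) = N * N"
  unfolding square_eq_cbox by (subst measure_lborel_cbox) (auto simp: Basis_prod_def inner_prod_def)

lemma sum_measure_le_measure_superset:
  assumes "finite S" "\<And>x. x \<in> S \<Longrightarrow> R x \<in> sets M" "\<And>x. x \<in> S \<Longrightarrow> R x \<subseteq> Q"
    and "Q \<in> fmeasurable M" "disjoint_family_on R S"
  shows "(\<Sum>x\<in>S. measure M (R x)) \<le> measure M Q"
proof -
  have "R x \<in> fmeasurable M" if "x \<in> S" for x
    using fmeasurableI2[OF assms(4) assms(3)[OF that] assms(2)[OF that]] .
  then have "(\<Sum>x\<in>S. measure M (R x)) = measure M (\<Union>x\<in>S. R x)"
    using assms(1,2,5) by (subst measure_finite_Union) (auto dest: fmeasurableD2)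
  also have "\<dots> \<le> measure M Q"
    using assms by (intro measure_mono_fmeasurable) auto
  finally show ?thesis .
qed

section \<open>The area bound\<close>

definition piece_width :: "real \<Rightarrow> (nat \<Rightarrow> real) \<Rightarrow> item \<Rightarrow> real" where
  "piece_width c ar it = (if snd it then c - ar (fst it) else c + ar (fst it))"

definition piece_height :: "real \<Rightarrow> (nat \<Rightarrow> real) \<Rightarrow> item \<Rightarrow> real" where
  "piece_height H ar it = (if snd it then H + ar (fst it) else H - ar (fst it))"

lemma item_width_eq: "item_width k n a = piece_width (bigN k n a / k) (\<lambda>i. real (a i))"
  by (auto simp: fun_eq_iff item_width_def piece_width_def)

lemma item_height_eq: "item_height k n a = piece_height (bigN k n a / 2) (\<lambda>i. real (a i))"
  by (auto simp: fun_eq_iff item_height_def piece_height_def)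

lemma piece_area_ge:
  assumes "0 \<le> ar i" "ar i \<le> M" "M \<le> c" "M \<le> H"
  shows "(c - M) * (H - M) \<le> piece_width c ar (i, b) * piece_height H ar (i, b)"
proof (cases b)
  case True
  have "(c - M) * (H - M) \<le> (c - ar i) * (H + ar i)"
    using assms by (intro mult_mono) auto
  with True show ?thesis by (simp add: piece_width_def piece_height_def)
next
  case False
  have "(c - M) * (H - M) \<le> (c + ar i) * (H - ar i)"
    using assms by (intro mult_mono) auto
  with False show ?thesis by (simp add: piece_width_def piece_height_def)
qed

lemma maxA_ge: "i < n \<Longrightarrow> a i \<le> maxA n a"
  unfolding maxA_def by (rule Max_ge) auto

lemma maxA_pos: "0 < n \<Longrightarrow> \<forall>i<n. 0 < a i \<Longrightarrow> 0 < maxA n a"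
  using maxA_ge[of 0 n a] by auto

lemma bigN_div_k: "0 < k \<Longrightarrow> bigN k n a / k = 2 * real (maxA n a) * real k ^ 3"
  by (simp add: bigN_def eval_nat_numeral)

lemma bigN_div_2: "bigN k n a / 2 = real (maxA n a) * real k ^ 4"
  by (simp add: bigN_def)

lemma maxA_le_bigN_div:
  assumes "0 < k"
  shows "real (maxA n a) \<le> bigN k n a / k" and "real (maxA n a) \<le> bigN k n a / 2"
proof -
  have "real (maxA n a) * 1 \<le> real (maxA n a) * real k ^ 3"
    and "real (maxA n a) * 1 \<le> real (maxA n a) * real k ^ 4"
    using assms by (intro mult_left_mono; simp)+
  then show "real (maxA n a) \<le> bigN k n a / k" "real (maxA n a) \<le> bigN k n a / 2"
    unfolding bigN_div_k[OF assms] bigN_div_2 by linarith+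
qed

lemma items_finite: "finite (items n)"
proof -
  have "items n = {..<n} \<times> UNIV" by (auto simp: items_def)
  then show ?thesis by simp
qed

lemma area_excess:
  fixes K M :: real
  assumes "2 \<le> K" "0 < M"
  shows "(2 * M * K^4)^2 < (2 * K + 1) * ((2 * M * K^3 - M) * (M * K^4 - M))"
proof -
  have KK: "2 * K \<le> K * K" using mult_right_mono[OF assms(1), of K] assms by simp
  have "4 * (K * K) \<le> (K * K) * (K * K)"
    using mult_right_mono[of 4 "K * K" "K * K"] KK assms by linarith
  moreover have "K^2 = K * K" "K^4 = (K * K) * (K * K)" by algebra+
  ultimately have "2 * K^2 + 5 * K + 2 < 2 * K^4" using KK assms by linarith
  then have "0 < K^3 * (2 * K^4 - 2 * K^2 - 5 * K - 2)" using assms by simp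
  then have "0 < M^2 * (K^3 * (2 * K^4 - 2 * K^2 - 5 * K - 2) + 2 * K + 1)"
    using assms by (intro mult_pos_pos) auto
  moreover have "(2 * K + 1) * ((2 * M * K^3 - M) * (M * K^4 - M)) - (2 * M * K^4)^2
      = M^2 * (K^3 * (2 * K^4 - 2 * K^2 - 5 * K - 2) + 2 * K + 1)"
    by algebra
  ultimately show ?thesis by linarith
qed

lemma feasible_packing_card_le:
  assumes packing: "feasible_packing k n a S pos rot"
    and "2 \<le> k" "0 < n" "\<forall>i<n. 0 < a i"
  shows "card S \<le> 2 * k"
proof -
  define M where "M = real (maxA n a)"
  define N where "N = bigN k n a"
  define A where "A = (N / k - M) * (N / 2 - M)"
  have k: "0 < k" using assms(2) by simp
  have S: "S \<subseteq> items n" "finite S"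
    using packing items_finite by (auto simp: feasible_packing_def intro: finite_subset)
  have area: "A \<le> measure lborel (placed k n a pos rot it)" if "it \<in> S" for it
  proof -
    obtain i b where it: "it = (i, b)" and "i < n" using S \<open>it \<in> S\<close> by (auto simp: items_def)
    then have bounds: "0 \<le> real (a i)" "real (a i) \<le> M" "M \<le> N / k" "M \<le> N / 2"
      using maxA_ge maxA_le_bigN_div[OF k] by (auto simp: M_def N_def)
    then have "0 \<le> item_width k n a it" "0 \<le> item_height k n a it"
      by (auto simp: it item_width_eq item_height_eq piece_width_def piece_height_def N_def)
    then have "measure lborel (placed k n a pos rot it) = item_width k n a it * item_height k n a it"
      by (simp add: placed_def measure_open_rect mult.commute)
    with piece_area_ge[where ar = "\<lambda>i. real (a i)", OF bounds] show ?thesis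
      by (simp add: A_def it item_width_eq item_height_eq N_def)
  qed
  have "real (card S) * A \<le> (\<Sum>it\<in>S. measure lborel (placed k n a pos rot it))"
    using sum_mono[OF area] by simp
  also have "\<dots> \<le> measure lborel ({0..N} \<times> {0..N})"
    using packing S(2) unfolding feasible_packing_def N_def
    by (intro sum_measure_le_measure_superset)
      (auto simp: placed_def open_rect_in_sets_borel square_eq_cbox disjoint_family_on_def)
  also have "\<dots> = N * N"
    by (simp add: measure_square N_def bigN_def)
  also have "\<dots> < (2 * real k + 1) * A"
  proof -
    have "N * N = (2 * M * real k ^ 4)^2" by (simp add: N_def M_def bigN_def power2_eq_square)
    moreover have "A = (2 * M * real k ^ 3 - M) * (M * real k ^ 4 - M)"
      by (simp add: A_def N_def M_def bigN_div_k[OF k] bigN_div_2)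
    moreover have "0 < M" using maxA_pos assms(3,4) by (simp add: M_def)
    ultimately show ?thesis using area_excess[of "real k" M] assms(2) by simp
  qed
  finally have "real (card S) * A < (2 * real k + 1) * A" .
  moreover have "0 \<le> A"
    using maxA_le_bigN_div[OF k] by (simp add: A_def M_def N_def)
  ultimately show ?thesis by (simp add: mult_less_cancel_right)
qed

section \<open>Staircase blocks\<close>

definition precedes :: "(nat \<Rightarrow> real) \<Rightarrow> nat \<Rightarrow> nat \<Rightarrow> bool" where
  "precedes ar i j \<longleftrightarrow> ar j < ar i \<or> (ar i = ar j \<and> i < j)"

text \<open>Left end of piece j when the pieces of I are laid side by side, with widths g, in the
  order given by precedes ar.\<close>

definition row_offset :: "(nat \<Rightarrow> real) \<Rightarrow> nat set \<Rightarrow> (nat \<Rightarrow> real) \<Rightarrow> nat \<Rightarrow> real" where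
  "row_offset ar I g j = (\<Sum>i | i \<in> I \<and> precedes ar i j. g i)"

lemma row_offset_nonneg: "(\<And>i. i \<in> I \<Longrightarrow> 0 \<le> g i) \<Longrightarrow> 0 \<le> row_offset ar I g j"
  unfolding row_offset_def by (rule sum_nonneg) auto

lemma row_offset_mono: "(\<And>i. i \<in> I \<Longrightarrow> g i \<le> h i) \<Longrightarrow> row_offset ar I g j \<le> row_offset ar I h j"
  unfolding row_offset_def by (rule sum_mono) auto

lemma row_offset_add_self:
  assumes "finite I"
  shows "row_offset ar I g j + g j = sum g (insert j {i \<in> I. precedes ar i j})"
  using assms by (simp add: row_offset_def precedes_def add.commute)

lemma row_offset_add_le:
  assumes "finite I" "i \<in> I" "precedes ar i j" "\<And>i. i \<in> I \<Longrightarrow> 0 \<le> g i"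
  shows "row_offset ar I g i + g i \<le> row_offset ar I g j"
  unfolding row_offset_add_self[OF assms(1)] unfolding row_offset_def
  using assms by (intro sum_mono2) (auto simp: precedes_def)

lemma row_offset_add_le_sum:
  assumes "finite I" "j \<in> I" "\<And>i. i \<in> I \<Longrightarrow> 0 \<le> g i"
  shows "row_offset ar I g j + g j \<le> sum g I"
  unfolding row_offset_add_self[OF assms(1)] using assms by (intro sum_mono2) auto

definition piece_rect ::
    "real \<Rightarrow> real \<Rightarrow> (nat \<Rightarrow> real) \<Rightarrow> (item \<Rightarrow> real \<times> real) \<Rightarrow> item \<Rightarrow> (real \<times> real) set" where
  "piece_rect c H ar pos it = open_rect (pos it) (piece_width c ar it) (piece_height H ar it)"

text \<open>The pieces (i, True) stand on the floor, the pieces (i, False) reach up to height 2H.\<close>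

definition stair_pos :: "(nat \<Rightarrow> real) \<Rightarrow> nat set \<Rightarrow> real \<Rightarrow> real \<Rightarrow> item \<Rightarrow> real \<times> real" where
  "stair_pos ar I c H it =
     (if snd it then (row_offset ar I (\<lambda>i. c - ar i) (fst it), 0)
      else (row_offset ar I (\<lambda>i. c + ar i) (fst it), H + ar (fst it)))"

lemma stair_pieces_disjoint:
  assumes "finite I" "\<forall>i\<in>I. 0 \<le> ar i \<and> ar i \<le> c" "i \<in> I" "j \<in> I" "(i, b) \<noteq> (j, b')"
  shows "piece_rect c H ar (stair_pos ar I c H) (i, b) \<inter> piece_rect c H ar (stair_pos ar I c H) (j, b') = {}"
proof -
  let ?P = "piece_rect c H ar (stair_pos ar I c H)"
  have widths: "0 \<le> c - ar l" "0 \<le> c + ar l" if "l \<in> I" for l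
    using assms(2) that by auto
  have same_row: "?P (l, \<beta>) \<inter> ?P (l', \<beta>) = {}" if "l \<in> I" "precedes ar l l'" for l l' \<beta>
  proof -
    have "row_offset ar I (\<lambda>i. c - ar i) l + (c - ar l) \<le> row_offset ar I (\<lambda>i. c - ar i) l'"
      using widths by (intro row_offset_add_le[OF assms(1) that]) auto
    moreover have "row_offset ar I (\<lambda>i. c + ar i) l + (c + ar l) \<le> row_offset ar I (\<lambda>i. c + ar i) l'"
      using widths by (intro row_offset_add_le[OF assms(1) that]) auto
    ultimately show ?thesis unfolding piece_rect_def
      by (intro open_rect_disjointI) (simp add: stair_pos_def piece_width_def)
  qed
  \<comment> \<open>The ceiling piece of l starts at height H + ar l, above every floor piece not preceding l.\<close>
  have cross: "?P (l, False) \<inter> ?P (l', True) = {}" if "l \<in> I" "l' \<in> I" for l l'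
  proof (cases "precedes ar l' l")
    case True
    have "row_offset ar I (\<lambda>i. c - ar i) l' + (c - ar l') \<le> row_offset ar I (\<lambda>i. c - ar i) l"
      using widths by (intro row_offset_add_le[OF assms(1) \<open>l' \<in> I\<close> True]) auto
    also have "\<dots> \<le> row_offset ar I (\<lambda>i. c + ar i) l"
      using assms(2) by (intro row_offset_mono) auto
    finally show ?thesis unfolding piece_rect_def
      by (intro open_rect_disjointI) (simp add: stair_pos_def piece_width_def)
  next
    case False
    then have "ar l' \<le> ar l" by (auto simp: precedes_def)
    then show ?thesis unfolding piece_rect_def
      by (intro open_rect_disjointI) (simp add: stair_pos_def piece_height_def)
  qed
  show ?thesis
  proof (cases "b = b'")
    case True
    with assms(5) have "precedes ar i j \<or> precedes ar j i" by (auto simp: precedes_def)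
    then show ?thesis using same_row assms(3,4) True by (auto simp: Int_commute)
  next
    case False
    then show ?thesis using cross assms(3,4) by (cases b) (auto simp: Int_commute)
  qed
qed

definition stair_region :: "real \<Rightarrow> real \<Rightarrow> real \<Rightarrow> (real \<times> real) set" where
  "stair_region H w_low w_up = {(u, v). 0 < u \<and> 0 < v \<and> v < 2 * H \<and> (u < w_low \<or> u < w_up \<and> H < v)}"

lemma stair_piece_subset_region:
  assumes "finite I" "\<forall>i\<in>I. 0 \<le> ar i \<and> ar i \<le> c \<and> ar i \<le> H" "i \<in> I"
  shows "piece_rect c H ar (stair_pos ar I c H) (i, b)
    \<subseteq> stair_region H (\<Sum>l\<in>I. c - ar l) (\<Sum>l\<in>I. c + ar l)"
proof -
  have "0 \<le> row_offset ar I (\<lambda>l. c - ar l) i" "0 \<le> row_offset ar I (\<lambda>l. c + ar l) i"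
    and "row_offset ar I (\<lambda>l. c - ar l) i + (c - ar i) \<le> (\<Sum>l\<in>I. c - ar l)"
    and "row_offset ar I (\<lambda>l. c + ar l) i + (c + ar i) \<le> (\<Sum>l\<in>I. c + ar l)"
    using assms by (auto intro!: row_offset_nonneg row_offset_add_le_sum)
  then show ?thesis using assms(2,3)
    by (auto simp: piece_rect_def open_rect_def stair_pos_def stair_region_def
        piece_width_def piece_height_def)
qed

lemma stair_region_subset_square:
  "w_low \<le> 2 * H \<Longrightarrow> w_up \<le> 2 * H \<Longrightarrow> stair_region H w_low w_up \<subseteq> {0..2 * H} \<times> {0..2 * H}"
  by (auto simp: stair_region_def)

definition reflect :: "real \<Rightarrow> real \<times> real \<Rightarrow> real \<times> real" where
  "reflect N z = (N - fst z, N - snd z)"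

lemma open_rect_reflect: "open_rect (N - fst p - w, N - snd p - h) w h = reflect N -` open_rect p w h"
  by (auto simp: open_rect_def reflect_def)

lemma reflect_vimage_square: "reflect N -` ({0..N} \<times> {0..N}) = {0..N} \<times> {0..N}"
  by (auto simp: reflect_def)

lemma stair_region_disjoint_reflect:
  assumes "l1 + u2 = 2 * H" "u1 + l2 = 2 * H" "l1 \<le> u1"
  shows "stair_region H l1 u1 \<inter> reflect (2 * H) -` stair_region H l2 u2 = {}"
  using assms by (auto simp: stair_region_def reflect_def)

text \<open>The block of A2 is built like that of A1 and turned by 180 degrees about the centre of the
  square [0, 2H] x [0, 2H].\<close>

definition two_stair_pos ::
    "(nat \<Rightarrow> real) \<Rightarrow> nat set \<Rightarrow> nat set \<Rightarrow> real \<Rightarrow> real \<Rightarrow> item \<Rightarrow> real \<times> real" where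
  "two_stair_pos ar A1 A2 c H it =
     (if fst it \<in> A1 then stair_pos ar A1 c H it
      else (2 * H - fst (stair_pos ar A2 c H it) - piece_width c ar it,
            2 * H - snd (stair_pos ar A2 c H it) - piece_height H ar it))"

lemma piece_rect_two_stair_pos:
  "fst it \<in> A1 \<Longrightarrow> piece_rect c H ar (two_stair_pos ar A1 A2 c H) it
     = piece_rect c H ar (stair_pos ar A1 c H) it"
  "fst it \<notin> A1 \<Longrightarrow> piece_rect c H ar (two_stair_pos ar A1 A2 c H) it
     = reflect (2 * H) -` piece_rect c H ar (stair_pos ar A2 c H) it"
  by (simp_all add: piece_rect_def two_stair_pos_def open_rect_reflect)

context
  fixes ar :: "nat \<Rightarrow> real" and A1 A2 :: "nat set" and c H :: real
  assumes finite: "finite A1" "finite A2" and disjoint: "A1 \<inter> A2 = {}"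
    and bounds: "\<forall>i\<in>A1 \<union> A2. 0 \<le> ar i \<and> ar i \<le> c \<and> ar i \<le> H"
    and balanced: "sum ar A1 = sum ar A2"
    and total_width: "real (card A1 + card A2) * c = 2 * H"
begin

lemma two_stair_row_widths:
  "(\<Sum>i\<in>A1. c - ar i) + (\<Sum>i\<in>A2. c + ar i) = 2 * H"
  "(\<Sum>i\<in>A1. c + ar i) + (\<Sum>i\<in>A2. c - ar i) = 2 * H"
  using balanced total_width by (simp_all add: sum.distrib sum_subtractf algebra_simps)

lemma two_stair_row_widths_le:
  "(\<Sum>i\<in>A1. c - ar i) \<le> (\<Sum>i\<in>A1. c + ar i)"
  "(\<Sum>i\<in>A1. c + ar i) \<le> 2 * H" "(\<Sum>i\<in>A2. c + ar i) \<le> 2 * H"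
proof -
  have "0 \<le> (\<Sum>i\<in>A1. c - ar i)" "0 \<le> (\<Sum>i\<in>A2. c - ar i)"
    using bounds by (auto intro!: sum_nonneg)
  moreover have "(\<Sum>i\<in>A1. c - ar i) \<le> (\<Sum>i\<in>A1. c + ar i)"
    using bounds by (auto intro!: sum_mono)
  ultimately show "(\<Sum>i\<in>A1. c - ar i) \<le> (\<Sum>i\<in>A1. c + ar i)"
    "(\<Sum>i\<in>A1. c + ar i) \<le> 2 * H" "(\<Sum>i\<in>A2. c + ar i) \<le> 2 * H"
    using two_stair_row_widths by linarith+
qed

lemma two_stair_piece_subset_square:
  assumes "i \<in> A1 \<union> A2"
  shows "piece_rect c H ar (two_stair_pos ar A1 A2 c H) (i, b) \<subseteq> {0..2 * H} \<times> {0..2 * H}"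
proof (cases "i \<in> A1")
  case True
  have "piece_rect c H ar (stair_pos ar A1 c H) (i, b)
      \<subseteq> stair_region H (\<Sum>l\<in>A1. c - ar l) (\<Sum>l\<in>A1. c + ar l)"
    using finite bounds True by (intro stair_piece_subset_region) auto
  also have "\<dots> \<subseteq> {0..2 * H} \<times> {0..2 * H}"
    using two_stair_row_widths_le by (intro stair_region_subset_square) auto
  finally show ?thesis using True by (simp add: piece_rect_two_stair_pos)
next
  case False
  then have "piece_rect c H ar (two_stair_pos ar A1 A2 c H) (i, b)
      = reflect (2 * H) -` piece_rect c H ar (stair_pos ar A2 c H) (i, b)"
    by (simp add: piece_rect_two_stair_pos)
  also have "\<dots> \<subseteq> reflect (2 * H) -` stair_region H (\<Sum>l\<in>A2. c - ar l) (\<Sum>l\<in>A2. c + ar l)"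
    using finite bounds False assms by (intro vimage_mono stair_piece_subset_region) auto
  also have "\<dots> \<subseteq> reflect (2 * H) -` ({0..2 * H} \<times> {0..2 * H})"
    using two_stair_row_widths two_stair_row_widths_le
    by (intro vimage_mono stair_region_subset_square) linarith+
  finally show ?thesis by (simp only: reflect_vimage_square)
qed

lemma two_stair_pieces_disjoint:
  assumes "i \<in> A1 \<union> A2" "j \<in> A1 \<union> A2" "(i, b) \<noteq> (j, b')"
  shows "piece_rect c H ar (two_stair_pos ar A1 A2 c H) (i, b)
    \<inter> piece_rect c H ar (two_stair_pos ar A1 A2 c H) (j, b') = {}"
proof -
  let ?P = "piece_rect c H ar (two_stair_pos ar A1 A2 c H)"
  have across: "?P (l, \<beta>) \<inter> ?P (l', \<beta>') = {}" if "l \<in> A1" "l' \<in> A2" for l l' \<beta> \<beta>'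
  proof -
    have "l' \<notin> A1" using disjoint that by auto
    have "?P (l, \<beta>) \<subseteq> stair_region H (\<Sum>l\<in>A1. c - ar l) (\<Sum>l\<in>A1. c + ar l)"
      using finite bounds that by (simp add: piece_rect_two_stair_pos stair_piece_subset_region)
    moreover have "?P (l', \<beta>') = reflect (2 * H) -` piece_rect c H ar (stair_pos ar A2 c H) (l', \<beta>')"
      using \<open>l' \<notin> A1\<close> by (simp add: piece_rect_two_stair_pos)
    moreover have "piece_rect c H ar (stair_pos ar A2 c H) (l', \<beta>')
        \<subseteq> stair_region H (\<Sum>l\<in>A2. c - ar l) (\<Sum>l\<in>A2. c + ar l)"
      using finite bounds that by (intro stair_piece_subset_region) auto
    moreover have "stair_region H (\<Sum>l\<in>A1. c - ar l) (\<Sum>l\<in>A1. c + ar l)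
        \<inter> reflect (2 * H) -` stair_region H (\<Sum>l\<in>A2. c - ar l) (\<Sum>l\<in>A2. c + ar l) = {}"
      using two_stair_row_widths two_stair_row_widths_le(1) by (rule stair_region_disjoint_reflect)
    ultimately show ?thesis by blast
  qed
  consider "i \<in> A1" "j \<in> A1" | "i \<in> A2" "j \<in> A2" "i \<notin> A1" "j \<notin> A1"
    | "i \<in> A1" "j \<in> A2" | "i \<in> A2" "j \<in> A1"
    using assms disjoint by blast
  then show ?thesis
  proof cases
    case 1
    then show ?thesis
      using stair_pieces_disjoint[of A1 ar c i j b b' H] finite bounds assms(3)
      by (simp add: piece_rect_two_stair_pos)
  next
    case 2
    then have "?P (i, b) \<inter> ?P (j, b') = reflect (2 * H) -`
        (piece_rect c H ar (stair_pos ar A2 c H) (i, b) \<inter> piece_rect c H ar (stair_pos ar A2 c H) (j, b'))"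
      by (simp add: piece_rect_two_stair_pos)
    also have "\<dots> = {}"
      using stair_pieces_disjoint[of A2 ar c i j b b' H] finite bounds assms(3) 2 by simp
    finally show ?thesis .
  next
    case 3
    then show ?thesis by (rule across)
  next
    case 4
    then show ?thesis using across[of j i b' b] by (simp add: Int_commute)
  qed
qed

end

section \<open>The packing instance\<close>

lemma placed_unrotated:
  "placed k n a pos (\<lambda>_. False) = piece_rect (bigN k n a / k) (bigN k n a / 2) (\<lambda>i. real (a i)) pos"
  by (simp add: fun_eq_iff placed_def piece_rect_def item_width_eq item_height_eq)

lemma packable_2DK_balanced_partition:
  assumes "0 < k" "finite A1" "finite A2" "A1 \<inter> A2 = {}" "A1 \<union> A2 \<subseteq> {..<n}"
    and "card A1 + card A2 = k" "(\<Sum>i\<in>A1. a i) = (\<Sum>i\<in>A2. a i)"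
  shows "packable_2DK k n a ((A1 \<union> A2) \<times> UNIV)"
proof -
  define N where "N = bigN k n a"
  have bounds: "\<forall>i\<in>A1 \<union> A2. 0 \<le> real (a i) \<and> real (a i) \<le> N / k \<and> real (a i) \<le> N / 2"
    using assms(5) maxA_ge maxA_le_bigN_div[OF assms(1)] unfolding N_def
    by (meson lessThan_iff of_nat_0_le_iff of_nat_le_iff order_trans subsetD)
  have balanced: "(\<Sum>i\<in>A1. real (a i)) = (\<Sum>i\<in>A2. real (a i))"
    using assms(7) by (metis of_nat_sum)
  have width: "real (card A1 + card A2) * (N / k) = 2 * (N / 2)"
    using assms(1,6) by simp
  note two_stair = assms(2-4) bounds balanced width
  have "feasible_packing k n a ((A1 \<union> A2) \<times> UNIV)
      (two_stair_pos (\<lambda>i. real (a i)) A1 A2 (N / k) (N / 2)) (\<lambda>_. False)"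
    unfolding feasible_packing_def placed_unrotated N_def[symmetric]
    using two_stair_piece_subset_square[OF two_stair] two_stair_pieces_disjoint[OF two_stair] assms(5)
    by (auto simp: items_def)
  then show ?thesis unfolding packable_2DK_def by blast
qed

lemma inj_on_image_interval_split:
  fixes f :: "nat \<Rightarrow> 'a"
  assumes "inj_on f {1..k}" "m \<le> k"
  shows "f ` {1..k} = f ` {1..m} \<union> f ` {m+1..k}"
    and "f ` {1..m} \<inter> f ` {m+1..k} = {}"
    and "card (f ` {1..m}) + card (f ` {m+1..k}) = k"
    and "sum g (f ` {1..m}) = (\<Sum>j=1..m. g (f j))"
    and "sum g (f ` {m+1..k}) = (\<Sum>j=m+1..k. g (f j))"
proof -
  have halves: "{1..k} = {1..m} \<union> {m+1..k}" "{1..m} \<inter> {m+1..k} = {}"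
    using assms(2) by auto
  then show "f ` {1..k} = f ` {1..m} \<union> f ` {m+1..k}"
    by (metis image_Un)
  show "f ` {1..m} \<inter> f ` {m+1..k} = {}"
    using assms(1) halves by (simp add: inj_on_image_Int[symmetric])
  have inj: "inj_on f {1..m}" "inj_on f {m+1..k}"
    using assms(1) halves(1) inj_on_Un by metis+
  then show "card (f ` {1..m}) + card (f ` {m+1..k}) = k"
    using assms(2) by (simp add: card_image)
  show "sum g (f ` {1..m}) = (\<Sum>j=1..m. g (f j))" "sum g (f ` {m+1..k}) = (\<Sum>j=m+1..k. g (f j))"
    using inj by (simp_all add: sum.reindex)
qed

lemma opt_eqI:
  assumes "packable_2DK k n a T" "card T = b"
    and "\<And>S pos rot. feasible_packing k n a S pos rot \<Longrightarrow> card S \<le> b"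
  shows "opt_2DK k n a = b" "opt_2DKR k n a = b"
proof -
  have Max_card: "Max (card ` {S. P S}) = b" if "P T" "\<And>S. P S \<Longrightarrow> card S \<le> b" for P
  proof (rule Max_eqI)
    show "finite (card ` {S. P S})"
      by (rule finite_subset[of _ "{..b}"]) (auto dest: that(2))
  qed (use that assms(2) in auto)
  show "opt_2DK k n a = b" unfolding opt_2DK_def
    using assms by (intro Max_card) (auto simp: packable_2DK_def)
  show "opt_2DKR k n a = b" unfolding opt_2DKR_def
    using assms by (intro Max_card) (auto simp: packable_2DK_def packable_2DKR_def)
qed

theorem mainTheorem9:
  fixes k n m :: nat and a :: "nat \<Rightarrow> nat" and idx :: "nat \<Rightarrow> nat"
  assumes "odd k" and "k \<ge> 9"
    and "\<forall>i<n. a i > 0"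
    and "inj_on idx {1..k}" and "idx ` {1..k} \<subseteq> {..<n}"
    and "1 \<le> m" and "m \<le> k - 1"
    and "(\<Sum>j=1..m. a (idx j)) = (\<Sum>j=m+1..k. a (idx j))"
  shows "packable_2DK k n a {(idx j, b) | j b. j \<in> {1..k}}
    \<and> (\<forall>S pos rot. feasible_packing k n a S pos rot \<longrightarrow> card S \<le> 2 * k)
    \<and> opt_2DK k n a = 2 * k \<and> opt_2DKR k n a = 2 * k"
proof -
  define A1 where "A1 = idx ` {1..m}"
  define A2 where "A2 = idx ` {m+1..k}"
  have "m \<le> k" using assms(7) by simp
  note split = inj_on_image_interval_split[OF assms(4) this, folded A1_def A2_def]
  have finite: "finite A1" "finite A2" by (simp_all add: A1_def A2_def)
  have "0 < n" using assms(2,5) by fastforce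
  then have upper: "feasible_packing k n a S pos rot \<Longrightarrow> card S \<le> 2 * k" for S pos rot
    using feasible_packing_card_le assms(2,3) by simp
  have packable: "packable_2DK k n a ((A1 \<union> A2) \<times> UNIV)"
  proof (rule packable_2DK_balanced_partition[OF _ finite split(2) _ split(3)])
    show "A1 \<union> A2 \<subseteq> {..<n}" using assms(5) split(1) by simp
    show "(\<Sum>i\<in>A1. a i) = (\<Sum>i\<in>A2. a i)" unfolding split(4,5) by (rule assms(8))
  qed (use assms(2) in simp)
  have card: "card ((A1 \<union> A2) \<times> (UNIV :: bool set)) = 2 * k"
    using split(2,3) finite by (simp add: card_cartesian_product card_Un_disjoint)
  have T: "{(idx j, b) | j b. j \<in> {1..k}} = (A1 \<union> A2) \<times> UNIV"
    using split(1) by blast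
  have "opt_2DK k n a = 2 * k" "opt_2DKR k n a = 2 * k"
    using opt_eqI[OF packable card] upper by blast+
  then show ?thesis unfolding T using packable upper by blast
qed

end
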